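(* Let $K$ be a positive integer, let $T>0$, and set $\omega_0 = \frac{2\pi}{T}$. Let $N$ be an integer and let $0\leq t_1<t_2<\cdots<t_N < T$. Define the $(N-1)\times(2K+1)$ complex matrix $\mathbf{A}$ whose columns are indexed by $k\in\{-K,\dots,K\}$ and whose rows are indexed by $n\in\{1,\dots,N-1\}$, with entries $$\mathbf{A}_{n,k} = e^{jk\omega_0 t_{n+1}} - e^{jk\omega_0 t_{n}} \quad (k\neq 0), \qquad \mathbf{A}_{n,0} = t_{n+1}-t_n .$$ Then $\mathbf{A}$ is left-invertible (i.e., has full column rank) provided that $N \geq 2K+2$.
   Context: Here $j$ denotes the imaginary unit. The columns are ordered $k=-K,\dots,-1,0,1,\dots,K$, so the middle column is $(t_2-t_1, t_3-t_2,\dots,t_N-t_{N-1})^\top$. *)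

theory Defs
  imports Complex_Main "Jordan_Normal_Form.Matrix"
begin

text \<open>The (N-1) x (2K+1) matrix A. Row index i (0-based) corresponds to n = i+1,
  column index c (0-based) corresponds to k = c - K. The sample times are t 1, ..., t N.\<close>
definition samp_mat :: "nat \<Rightarrow> real \<Rightarrow> nat \<Rightarrow> (nat \<Rightarrow> real) \<Rightarrow> complex mat" where
  "samp_mat K T N t = mat (N - 1) (2 * K + 1) (\<lambda>(i, c).
     let n = i + 1; k = int c - int K; w0 = 2 * pi / T in
     if k = 0 then complex_of_real (t (n + 1) - t n)
     else exp (\<i> * of_int k * of_real w0 * of_real (t (n + 1)))
        - exp (\<i> * of_int k * of_real w0 * of_real (t n)))"

end

theory Submission
  imports Defs "Jordan_Normal_Form.Determinant" "HOL-Library.Real_Mod"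
begin

(* Let v be in the kernel of A and put G x = v_0 x + sum_{k <> 0} v_k e^(j k w0 x). Then A v = 0
   says that G takes the same value at t_1, ..., t_N. By Rolle, Re G' vanishes at N - 1 >= 2K + 1
   interlacing points of [0, T). But 2 Re G' is a trigonometric polynomial of degree K, i.e.
   e^(-j K w0 x) times a polynomial of degree 2K in e^(j w0 x), and x -> e^(j w0 x) is injective
   on [0, T); so all its coefficients vanish, among them the constant one, 2 Re v_0. The same
   argument for -j G gives Im v_0 = 0. Now G itself is a trigonometric polynomial of degree K
   that is constant on N > 2K points, so v = 0. Only t_1, ..., t_(2K+2) are needed, hence the
   top square block of A is already invertible, which yields a left inverse. *)

lemma strict_mono_on_atLeastAtMost_Suc:
  fixes f :: "nat \<Rightarrow> 'a :: order"
  assumes "\<And>n. a \<le> n \<Longrightarrow> n < b \<Longrightarrow> f n < f (Suc n)"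
  shows "strict_mono_on {a..b} f"
proof (rule strict_mono_onI)
  fix i j assume "i \<in> {a..b}" "j \<in> {a..b}" "i < j"
  then have "Suc i \<le> j" "j \<le> b" "a \<le> i" by auto
  then show "f i < f j"
  proof (induction j rule: dec_induct)
    case base
    then show ?case using assms by simp
  next
    case (step j)
    then show ?case using assms[of j] less_trans by force
  qed
qed

lemma Rolle_interlaced:
  fixes f f' :: "real \<Rightarrow> real" and t :: "nat \<Rightarrow> real"
  assumes deriv: "\<And>x. (f has_real_derivative f' x) (at x)"
    and mono: "strict_mono_on {1..N} t"
    and eq: "\<And>n. 1 \<le> n \<Longrightarrow> n < N \<Longrightarrow> f (t (Suc n)) = f (t n)"
  shows "\<exists>S. S \<subseteq> {t 1<..<t N} \<and> card S = N - 1 \<and> (\<forall>s\<in>S. f' s = 0)"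
proof -
  have "\<exists>s. t n < s \<and> s < t (Suc n) \<and> f' s = 0" if n: "1 \<le> n" "n < N" for n
  proof -
    have less: "t n < t (Suc n)" using strict_mono_onD[OF mono] n by simp
    have cont: "continuous_on {t n..t (Suc n)} f"
      using deriv by (meson DERIV_isCont continuous_at_imp_continuous_on)
    have "f differentiable (at x)" for x
      using deriv real_differentiable_def by blast
    then obtain s where "t n < s" "s < t (Suc n)" "DERIV f s :> 0"
      using Rolle[OF less eq[OF n, symmetric] cont] by blast
    with DERIV_unique[OF deriv] show ?thesis by blast
  qed
  then obtain s where s: "\<And>n. 1 \<le> n \<Longrightarrow> n < N \<Longrightarrow> t n < s n \<and> s n < t (Suc n) \<and> f' (s n) = 0"
    by metis
  have t_le: "t i \<le> t j" if "1 \<le> i" "i \<le> j" "j \<le> N" for i j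
    using strict_mono_on_leD[OF mono] that by simp
  have "strict_mono_on {1..<N} s"
  proof (rule strict_mono_onI)
    fix i j assume "i \<in> {1..<N}" "j \<in> {1..<N}" "i < j"
    then show "s i < s j"
      using s[of i] s[of j] t_le[of "Suc i" j] by fastforce
  qed
  then have "card (s ` {1..<N}) = N - 1"
    by (simp add: card_image strict_mono_on_imp_inj_on)
  moreover have "s ` {1..<N} \<subseteq> {t 1<..<t N}"
  proof
    fix x assume "x \<in> s ` {1..<N}"
    then obtain n where n: "1 \<le> n" "n < N" and x: "x = s n" by auto
    have "t 1 \<le> t n" "t (Suc n) \<le> t N" using t_le n by simp_all
    with s[OF n] show "x \<in> {t 1<..<t N}" using x by auto
  qed
  moreover have "\<forall>x\<in>s ` {1..<N}. f' x = 0"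
    using s by auto
  ultimately show ?thesis by blast
qed

lemma cis_neq_1_if_in_period:
  assumes "0 < x" "x < 2 * pi"
  shows "cis x \<noteq> 1"
proof
  assume "cis x = 1"
  then obtain n :: int where n: "x = of_int n * (2 * pi)"
    by (auto simp: cis_eq_1_iff)
  with assms have "0 < real_of_int n" "real_of_int n < 1"
    by (simp_all add: zero_less_mult_iff)
  then have "0 < n" "n < 1" by simp_all
  then show False by simp
qed

lemma inj_on_cis_period:
  assumes "T > 0"
  shows "inj_on (\<lambda>s. cis (2 * pi / T * s)) {0..<T}"
proof (rule linorder_inj_onI)
  fix a b assume ab: "a < b" "a \<in> {0..<T}" "b \<in> {0..<T}"
  let ?w = "2 * pi / T"
  have "0 < ?w * (b - a)" "?w * (b - a) < ?w * T"
    using ab assms by (simp, intro mult_strict_left_mono) auto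
  then have "cis (?w * b - ?w * a) \<noteq> 1"
    using assms by (intro cis_neq_1_if_in_period) (simp_all add: right_diff_distrib)
  then show "cis (?w * a) \<noteq> cis (?w * b)"
    by (metis cis_divide divide_self cis_neq_zero)
qed auto

lemma cis_linear_has_vector_derivative:
  "((\<lambda>s. cis (a * s)) has_vector_derivative \<i> * of_real a * cis (a * s)) (at s)"
  unfolding has_vector_derivative_def
  by (auto intro!: derivative_eq_intros simp: scaleR_conv_of_real)

definition trig_poly :: "real \<Rightarrow> nat \<Rightarrow> (nat \<Rightarrow> complex) \<Rightarrow> real \<Rightarrow> complex" where
  "trig_poly \<omega> K c s = (\<Sum>m\<le>2 * K. c m * cis ((real m - real K) * \<omega> * s))"

lemma trig_poly_eq_poly:
  "trig_poly \<omega> K c s = cis (- (real K * \<omega> * s)) * (\<Sum>m\<le>2 * K. c m * cis (\<omega> * s) ^ m)"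
  unfolding trig_poly_def sum_distrib_left DeMoivre
  by (intro sum.cong) (auto simp: cis_mult algebra_simps)

lemma trig_poly_coeffs_eq_0:
  assumes inj: "inj_on (\<lambda>s. cis (\<omega> * s)) S" and card: "card S > 2 * K"
    and zero: "\<And>s. s \<in> S \<Longrightarrow> trig_poly \<omega> K c s = 0" and m: "m \<le> 2 * K"
  shows "c m = 0"
proof (rule ccontr)
  assume "c m \<noteq> 0"
  let ?roots = "{z. (\<Sum>i\<le>2 * K. c i * z ^ i) = 0}"
  have roots: "finite ?roots" "card ?roots \<le> 2 * K"
    using polyfun_rootbound[of c m "2 * K"] \<open>c m \<noteq> 0\<close> m by simp_all
  have "(\<lambda>s. cis (\<omega> * s)) ` S \<subseteq> ?roots"
    using zero by (auto simp: trig_poly_eq_poly)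
  then have "card ((\<lambda>s. cis (\<omega> * s)) ` S) \<le> card ?roots"
    by (rule card_mono[OF roots(1)])
  then have "card S \<le> card ?roots"
    by (simp add: card_image[OF inj])
  with roots card show False by simp
qed

lemma trig_poly_add_const:
  "trig_poly \<omega> K (\<lambda>m. c m + (if m = K then a else 0)) x = trig_poly \<omega> K c x + a"
proof -
  have "(\<Sum>m\<le>2 * K. (if m = K then a else 0) * cis ((real m - real K) * \<omega> * x))
      = (\<Sum>m\<le>2 * K. if m = K then a else 0)"
    by (intro sum.cong) auto
  also have "\<dots> = a" by simp
  finally show ?thesis
    by (simp add: trig_poly_def distrib_right sum.distrib)
qed

lemma trig_poly_has_vector_derivative:
  "(trig_poly \<omega> K c has_vector_derivative
     trig_poly \<omega> K (\<lambda>m. \<i> * of_real ((real m - real K) * \<omega>) * c m) s) (at s)"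
proof -
  have "((\<lambda>s. c m * cis ((real m - real K) * \<omega> * s)) has_vector_derivative
      \<i> * of_real ((real m - real K) * \<omega>) * c m * cis ((real m - real K) * \<omega> * s)) (at s)" for m
    by (rule has_vector_derivative_eq_rhs[OF
          has_vector_derivative_mult_right[OF cis_linear_has_vector_derivative]])
      (simp add: algebra_simps)
  then show ?thesis
    unfolding trig_poly_def by (rule has_vector_derivative_sum)
qed

lemma Re_trig_poly:
  "complex_of_real (2 * Re (trig_poly \<omega> K c s)) = trig_poly \<omega> K (\<lambda>m. c m + cnj (c (2 * K - m))) s"
proof -
  have "complex_of_real (2 * Re (trig_poly \<omega> K c s)) = trig_poly \<omega> K c s + cnj (trig_poly \<omega> K c s)"
    by (simp add: complex_add_cnj)
  also have "cnj (trig_poly \<omega> K c s) = (\<Sum>m\<le>2 * K. cnj (c m) * cis (- ((real m - real K) * \<omega> * s)))"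
    unfolding trig_poly_def cnj_sum complex_cnj_mult cis_cnj ..
  also have "\<dots> = (\<Sum>m\<le>2 * K. cnj (c (2 * K - m)) * cis ((real m - real K) * \<omega> * s))"
    by (rule sum.reindex_bij_witness[where i = "\<lambda>m. 2 * K - m" and j = "\<lambda>m. 2 * K - m"])
      (auto simp: of_nat_diff algebra_simps)
  finally show ?thesis
    by (simp only: trig_poly_def distrib_right sum.distrib)
qed

text \<open>Column \<open>m\<close> of \<^const>\<open>samp_mat\<close> holds the increments of \<open>x\<close> for \<open>m = K\<close> and of
  \<open>cis ((m - K) \<omega> x)\<close> otherwise, so \<open>A v\<close> lists the increments of this function with
  coefficients \<open>v\<close>; the constant term \<open>c K\<close> of the trigonometric part does not affect them.\<close>

definition ramp_trig_poly :: "real \<Rightarrow> nat \<Rightarrow> (nat \<Rightarrow> complex) \<Rightarrow> real \<Rightarrow> complex" where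
  "ramp_trig_poly \<omega> K c x = of_real x * c K + trig_poly \<omega> K c x"

lemma ramp_trig_poly_has_vector_derivative:
  "(ramp_trig_poly \<omega> K c has_vector_derivative
     trig_poly \<omega> K (\<lambda>m. if m = K then c K else \<i> * of_real ((real m - real K) * \<omega>) * c m) x) (at x)"
proof -
  let ?b = "\<lambda>m. \<i> * of_real ((real m - real K) * \<omega>) * c m"
  have split: "(\<lambda>m. if m = K then c K else ?b m) = (\<lambda>m. ?b m + (if m = K then c K else 0))"
    by auto
  have eq: "trig_poly \<omega> K (\<lambda>m. if m = K then c K else ?b m) x = c K + trig_poly \<omega> K ?b x"
    unfolding split trig_poly_add_const by (rule add.commute)
  have "((\<lambda>x. of_real x * c K) has_vector_derivative c K) (at x)"
    using has_vector_derivative_mult_left[OF has_vector_derivative_of_real[OF DERIV_ident]] by simp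
  then have "(ramp_trig_poly \<omega> K c has_vector_derivative c K + trig_poly \<omega> K ?b x) (at x)"
    unfolding ramp_trig_poly_def by (rule has_vector_derivative_add[OF _ trig_poly_has_vector_derivative])
  then show ?thesis by (simp only: eq)
qed

lemma ramp_trig_poly_Re_coeff_eq_0:
  assumes T: "T > 0" and mono: "strict_mono_on {1..N} t" and range: "0 \<le> t 1" "t N < T"
    and N: "2 * K + 2 \<le> N"
    and eq: "\<And>n. 1 \<le> n \<Longrightarrow> n < N \<Longrightarrow>
      ramp_trig_poly (2 * pi / T) K c (t (Suc n)) = ramp_trig_poly (2 * pi / T) K c (t n)"
  shows "Re (c K) = 0"
proof -
  let ?\<omega> = "2 * pi / T"
  define a where "a m = (if m = K then c K else \<i> * of_real ((real m - real K) * ?\<omega>) * c m)" for m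
  have deriv: "((\<lambda>x. Re (ramp_trig_poly ?\<omega> K c x)) has_real_derivative
      Re (trig_poly ?\<omega> K a x)) (at x)" for x
    unfolding has_real_derivative_iff_has_vector_derivative a_def
    by (rule bounded_linear.has_vector_derivative[OF bounded_linear_Re
          ramp_trig_poly_has_vector_derivative])
  have "Re (ramp_trig_poly ?\<omega> K c (t (Suc n))) = Re (ramp_trig_poly ?\<omega> K c (t n))"
    if "1 \<le> n" "n < N" for n
    using eq[OF that] by simp
  then obtain S where S: "S \<subseteq> {t 1<..<t N}" "card S = N - 1"
      and zero: "\<forall>s\<in>S. Re (trig_poly ?\<omega> K a s) = 0"
    using Rolle_interlaced[OF deriv mono] by blast
  have "S \<subseteq> {0..<T}" using S(1) range by auto
  then have inj: "inj_on (\<lambda>s. cis (?\<omega> * s)) S"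
    by (rule inj_on_subset[OF inj_on_cis_period[OF T]])
  have card: "card S > 2 * K" using S(2) N by simp
  have "trig_poly ?\<omega> K (\<lambda>m. a m + cnj (a (2 * K - m))) s = 0" if "s \<in> S" for s
    using Re_trig_poly[of ?\<omega> K a s] zero that by simp
  from trig_poly_coeffs_eq_0[OF inj card this, of K] have "a K + cnj (a K) = 0"
    by simp
  then show ?thesis
    by (simp add: a_def complex_add_cnj)
qed

lemma ramp_trig_poly_coeffs_eq_0:
  assumes T: "T > 0" and mono: "strict_mono_on {1..N} t" and range: "0 \<le> t 1" "t N < T"
    and N: "2 * K + 2 \<le> N"
    and eq: "\<And>n. 1 \<le> n \<Longrightarrow> n < N \<Longrightarrow>
      ramp_trig_poly (2 * pi / T) K c (t (Suc n)) = ramp_trig_poly (2 * pi / T) K c (t n)"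
    and m: "m \<le> 2 * K"
  shows "c m = 0"
proof -
  let ?\<omega> = "2 * pi / T"
  have "ramp_trig_poly ?\<omega> K (\<lambda>m. - \<i> * c m) x = - \<i> * ramp_trig_poly ?\<omega> K c x" for x
    by (simp add: ramp_trig_poly_def trig_poly_def sum_distrib_left algebra_simps)
  then have "Re (- \<i> * c K) = 0"
    using ramp_trig_poly_Re_coeff_eq_0[OF T mono range N, of "\<lambda>m. - \<i> * c m"] eq by simp
  moreover have "Re (c K) = 0"
    by (rule ramp_trig_poly_Re_coeff_eq_0[OF T mono range N eq])
  ultimately have cK: "c K = 0"
    by (simp add: complex_eq_iff)
  then have ramp: "ramp_trig_poly ?\<omega> K c = trig_poly ?\<omega> K c"
    by (simp add: ramp_trig_poly_def fun_eq_iff)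
  define C where "C = trig_poly ?\<omega> K c (t 1)"
  have const: "trig_poly ?\<omega> K c (t n) = C" if "1 \<le> n" "n \<le> N" for n
    using that
  proof (induction n rule: dec_induct)
    case (step n)
    then show ?case using eq[of n] by (simp add: ramp)
  qed (simp add: C_def)
  have "inj_on t {1..N}"
    by (rule strict_mono_on_imp_inj_on[OF mono])
  then have card: "card (t ` {1..N}) > 2 * K"
    using N by (simp add: card_image)
  have "t ` {1..N} \<subseteq> {0..<T}"
  proof
    fix x assume "x \<in> t ` {1..N}"
    then obtain n where "n \<in> {1..N}" "x = t n" by auto
    then have "t 1 \<le> x" "x \<le> t N"
      using strict_mono_on_leD[OF mono] N by auto
    with range show "x \<in> {0..<T}" by simp
  qed
  then have inj: "inj_on (\<lambda>s. cis (?\<omega> * s)) (t ` {1..N})"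
    by (rule inj_on_subset[OF inj_on_cis_period[OF T]])
  have "trig_poly ?\<omega> K (\<lambda>m. c m + (if m = K then - C else 0)) s = 0" if "s \<in> t ` {1..N}" for s
    using that const by (auto simp: trig_poly_add_const)
  from trig_poly_coeffs_eq_0[OF inj card this m] cK show ?thesis
    by (simp split: if_splits)
qed

lemma left_inverse_if_det_top_block_neq_0:
  fixes A :: "'a :: field mat"
  assumes A: "A \<in> carrier_mat m n" and "n \<le> m"
    and det: "det (mat n n (\<lambda>(i, j). A $$ (i, j))) \<noteq> 0"
  shows "\<exists>B. B \<in> carrier_mat n m \<and> B * A = 1\<^sub>m n"
proof -
  let ?S = "mat n n (\<lambda>(i, j). A $$ (i, j))"
  have S: "?S \<in> carrier_mat n n" by simp
  obtain S' where S': "S' \<in> carrier_mat n n" "S' * ?S = 1\<^sub>m n"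
    using det_non_zero_imp_unit[OF S det] by (auto simp: Units_def ring_mat_def)
  define B where "B = mat n m (\<lambda>(i, j). if j < n then S' $$ (i, j) else 0)"
  have "B * A = S' * ?S"
  proof (rule eq_matI)
    fix i j assume ij: "i < dim_row (S' * ?S)" "j < dim_col (S' * ?S)"
    then have "(B * A) $$ (i, j) = (\<Sum>l<m. B $$ (i, l) * A $$ (l, j))"
      using A S' by (simp add: B_def scalar_prod_def atLeast0LessThan)
    also have "\<dots> = (\<Sum>l<n. S' $$ (i, l) * A $$ (l, j))"
      using \<open>n \<le> m\<close> ij S' by (intro sum.mono_neutral_cong_right) (auto simp: B_def)
    also have "\<dots> = (S' * ?S) $$ (i, j)"
      using ij S'(1) by (simp add: scalar_prod_def atLeast0LessThan)
    finally show "(B * A) $$ (i, j) = (S' * ?S) $$ (i, j)" .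
  qed (use A S' in \<open>simp_all add: B_def\<close>)
  moreover have "B \<in> carrier_mat n m" by (simp add: B_def)
  ultimately show ?thesis using S' by auto
qed

lemma samp_mat_mult_vec:
  assumes i: "i < N - 1" and v: "v \<in> carrier_vec (2 * K + 1)"
  shows "(samp_mat K T N t *\<^sub>v v) $ i
    = ramp_trig_poly (2 * pi / T) K (\<lambda>m. v $ m) (t (i + 2))
      - ramp_trig_poly (2 * pi / T) K (\<lambda>m. v $ m) (t (i + 1))"
proof -
  let ?e = "\<lambda>m x. cis ((real m - real K) * (2 * pi / T) * x)"
  let ?d = "\<lambda>m. ?e m (t (i + 2)) - ?e m (t (i + 1))"
  have entry: "samp_mat K T N t $$ (i, m)
      = ?d m + (if m = K then of_real (t (i + 2) - t (i + 1)) else 0)" if "m < 2 * K + 1" for m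
    using i that by (auto simp: samp_mat_def cis_conv_exp numeral_2_eq_2 mult.assoc)
  have "(samp_mat K T N t *\<^sub>v v) $ i = (\<Sum>m\<le>2 * K. samp_mat K T N t $$ (i, m) * v $ m)"
    using i v by (simp add: samp_mat_def scalar_prod_def atLeast0LessThan lessThan_Suc_atMost)
  also have "\<dots> = (\<Sum>m\<le>2 * K. ?d m * v $ m
      + (if m = K then of_real (t (i + 2) - t (i + 1)) * v $ m else 0))"
    by (intro sum.cong refl) (simp add: entry distrib_right)
  also have "\<dots> = (\<Sum>m\<le>2 * K. ?d m * v $ m) + of_real (t (i + 2) - t (i + 1)) * v $ K"
    by (simp add: sum.distrib)
  also have "\<dots> = ramp_trig_poly (2 * pi / T) K (\<lambda>m. v $ m) (t (i + 2))
      - ramp_trig_poly (2 * pi / T) K (\<lambda>m. v $ m) (t (i + 1))"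
    by (simp add: ramp_trig_poly_def trig_poly_def right_diff_distrib sum_subtractf algebra_simps)
  finally show ?thesis .
qed

lemma samp_mat_mult_vec_eq_0_imp:
  assumes T: "T > 0" and mono: "strict_mono_on {1..N} t" and range: "0 \<le> t 1" "t N < T"
    and N: "2 * K + 2 \<le> N"
    and v: "v \<in> carrier_vec (2 * K + 1)" and Av: "samp_mat K T N t *\<^sub>v v = 0\<^sub>v (N - 1)"
  shows "v = 0\<^sub>v (2 * K + 1)"
proof -
  let ?G = "ramp_trig_poly (2 * pi / T) K (\<lambda>m. v $ m)"
  have "?G (t (Suc n)) = ?G (t n)" if "1 \<le> n" "n < N" for n
  proof -
    have "(samp_mat K T N t *\<^sub>v v) $ (n - 1) = 0"
      using Av that by simp
    then show ?thesis
      using samp_mat_mult_vec[OF _ v, of "n - 1" N T t] that by simp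
  qed
  then have "v $ m = 0" if "m \<le> 2 * K" for m
    using ramp_trig_poly_coeffs_eq_0[OF T mono range N _ that] by blast
  then show ?thesis
    using v by (intro eq_vecI) auto
qed

lemma det_samp_mat_neq_0:
  assumes T: "T > 0" and mono: "strict_mono_on {1..2 * K + 2} t"
    and range: "0 \<le> t 1" "t (2 * K + 2) < T"
  shows "det (samp_mat K T (2 * K + 2) t) \<noteq> 0"
proof
  have A: "samp_mat K T (2 * K + 2) t \<in> carrier_mat (2 * K + 1) (2 * K + 1)"
    by (simp add: samp_mat_def)
  assume "det (samp_mat K T (2 * K + 2) t) = 0"
  then obtain v where v: "v \<in> carrier_vec (2 * K + 1)" "v \<noteq> 0\<^sub>v (2 * K + 1)"
      "samp_mat K T (2 * K + 2) t *\<^sub>v v = 0\<^sub>v (2 * K + 1)"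
    using det_0_iff_vec_prod_zero[OF A] by blast
  have "v = 0\<^sub>v (2 * K + 1)"
    by (rule samp_mat_mult_vec_eq_0_imp[OF T mono range order.refl v(1)]) (use v(3) in simp)
  with v(2) show False ..
qed

lemma samp_mat_top_block:
  assumes "2 * K + 2 \<le> N"
  shows "mat (2 * K + 1) (2 * K + 1) (\<lambda>(i, j). samp_mat K T N t $$ (i, j)) = samp_mat K T (2 * K + 2) t"
  using assms by (intro eq_matI) (auto simp: samp_mat_def)

theorem theorem1:
  fixes K N :: nat and T :: real and t :: "nat \<Rightarrow> real"
  assumes "K > 0" and "T > 0"
    and "0 \<le> t 1"
    and "\<And>n. 1 \<le> n \<Longrightarrow> n < N \<Longrightarrow> t n < t (n + 1)"
    and "t N < T"
    and "N \<ge> 2 * K + 2"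
  shows "\<exists>B. B \<in> carrier_mat (2 * K + 1) (N - 1) \<and>
              B * samp_mat K T N t = 1\<^sub>m (2 * K + 1)"
proof -
  have mono: "strict_mono_on {1..N} t"
    using assms(4) by (intro strict_mono_on_atLeastAtMost_Suc) simp
  then have mono': "strict_mono_on {1..2 * K + 2} t"
    by (rule monotone_on_subset) (use assms(6) in auto)
  have "t (2 * K + 2) \<le> t N"
    using strict_mono_on_leD[OF mono] assms(6) by simp
  then have "det (samp_mat K T (2 * K + 2) t) \<noteq> 0"
    using det_samp_mat_neq_0[OF assms(2) mono' assms(3)] assms(5) by simp
  then have det: "det (mat (2 * K + 1) (2 * K + 1) (\<lambda>(i, j). samp_mat K T N t $$ (i, j))) \<noteq> 0"
    unfolding samp_mat_top_block[OF assms(6)] .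
  have "samp_mat K T N t \<in> carrier_mat (N - 1) (2 * K + 1)"
    by (simp add: samp_mat_def)
  moreover have "2 * K + 1 \<le> N - 1"
    using assms(6) by simp
  ultimately show ?thesis
    using left_inverse_if_det_top_block_neq_0 det by blast
qed

end
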